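(* Let $\Sigma$ be a non-empty finite or countably infinite alphabet and let $\mu_p$ be the probability map induced by a Bernoulli distribution $p$ on $\Sigma$. If $\alpha\in\Sigma^\omega$ is $\mu_p$-distributed, then $\alpha$ is $\mu_p$-block-distributed.
   Context: $\mu_p(a_1\cdots a_n)=\prod_{i=1}^n p(a_i)$ where $p:\Sigma\to[0,1]$, $\sum_a p(a)=1$. $\alpha$ is $\mu_p$-distributed if for every $w\in\Sigma^+$, $\lim_{N\to\infty}\#_w(\alpha|_{\le N})/N=\mu_p(w)$, where $\#_w(v)$ counts occurrences of $w$ as a contiguous block of $v$ and $\alpha|_{\le N}$ is the length-$N$ prefix. For $\alpha=x_1x_2\cdots$ and $n\ge1$, the $n$-block decomposition is $(\alpha_{(n,r)})_{r\ge1}$ with $\alpha_{(n,r)}=x_{(r-1)n+1}\cdots x_{rn}$. $\alpha$ is $\mu_p$-block-distributed if for every $n\ge1$ and every $w\in\Sigma^n$, $\lim_{k\to\infty}|\{r\le k:\alpha_{(n,r)}=w\}|/k=\mu_p(w)$. *)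

theory Defs
  imports "HOL-Analysis.Analysis" "HOL-Library.Countable"
begin

text \<open>Infinite words over alphabet 'a are modelled as functions nat => 'a, indexed from 0,
  so x_1 x_2 ... corresponds to alpha 0, alpha 1, ...; finite words are lists.\<close>

definition bernoulli_dist :: "('a \<Rightarrow> real) \<Rightarrow> bool" where
  "bernoulli_dist p \<longleftrightarrow> (\<forall>a. 0 \<le> p a \<and> p a \<le> 1) \<and> (p has_sum 1) UNIV"

definition mu :: "('a \<Rightarrow> real) \<Rightarrow> 'a list \<Rightarrow> real" where
  "mu p w = (\<Prod>i<length w. p (w ! i))"

definition factor :: "(nat \<Rightarrow> 'a) \<Rightarrow> nat \<Rightarrow> nat \<Rightarrow> 'a list" where
  "factor \<alpha> i n = map \<alpha> [i..<i + n]"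

definition occ_prefix :: "(nat \<Rightarrow> 'a) \<Rightarrow> 'a list \<Rightarrow> nat \<Rightarrow> nat" where
  "occ_prefix \<alpha> w N = card {i. i + length w \<le> N \<and> factor \<alpha> i (length w) = w}"

definition mu_distributed :: "('a \<Rightarrow> real) \<Rightarrow> (nat \<Rightarrow> 'a) \<Rightarrow> bool" where
  "mu_distributed p \<alpha> \<longleftrightarrow>
     (\<forall>w. w \<noteq> [] \<longrightarrow> ((\<lambda>N. real (occ_prefix \<alpha> w N) / real N) \<longlonglongrightarrow> mu p w))"

text \<open>The r-th block (r >= 1) of the n-block decomposition is factor alpha ((r-1)*n) n.\<close>
definition mu_block_distributed :: "('a \<Rightarrow> real) \<Rightarrow> (nat \<Rightarrow> 'a) \<Rightarrow> bool" where
  "mu_block_distributed p \<alpha> \<longleftrightarrow>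
     (\<forall>n\<ge>1. \<forall>w. length w = n \<longrightarrow>
        ((\<lambda>k. real (card {r. 1 \<le> r \<and> r \<le> k \<and> factor \<alpha> ((r - 1) * n) n = w}) / real k)
           \<longlonglongrightarrow> mu p w))"

end

theory Submission
  imports Defs
begin

text \<open>Let \<open>n = |w|\<close> and \<open>q = \<mu>(w)\<close>. Counting occurrences of \<open>w v w\<close> for the gap words \<open>v\<close>
  over a finite set of letters of almost full mass shows that occurrences of \<open>w\<close> at positions
  \<open>tn\<close> apart (\<open>t \<ge> 1\<close>) have joint frequency at most \<open>q\<^sup>2 + o(1)\<close>. Hence the mean of the
  indicators of \<open>w\<close> at \<open>k\<close> consecutive block positions has second moment about \<open>q/k\<close> around
  \<open>q\<close>, which bounds the upper frequency of \<open>w\<close> among the blocks of every offset \<open>j\<close> by \<open>q + \<epsilon>\<close>.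
  The \<open>n\<close> offsets together account for all occurrences of \<open>w\<close>, of frequency \<open>q\<close> per position,
  so no offset can have lower frequency below \<open>q - \<epsilon>\<close> either.\<close>

lemma LIMSEQ_frequency_bounded_shift:
  fixes f g :: "nat \<Rightarrow> real"
  assumes f: "(\<lambda>N. f N / real N) \<longlonglongrightarrow> L" and bounded: "\<And>N. \<bar>g N - f (N + d)\<bar> \<le> C"
  shows "(\<lambda>N. g N / real N) \<longlonglongrightarrow> L"
proof -
  have "(\<lambda>N. f (N + d) / real (N + d) * (1 + real d / real N)) \<longlonglongrightarrow> L * (1 + 0)"
    using LIMSEQ_ignore_initial_segment[OF f, of d]
    by (intro tendsto_mult tendsto_add tendsto_const lim_const_over_n) simp_all
  moreover have "(\<lambda>N. (g N - f (N + d)) / real N) \<longlonglongrightarrow> 0"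
    by (rule Lim_null_comparison[OF _ lim_const_over_n[of C]])
       (simp add: bounded divide_right_mono)
  ultimately have "(\<lambda>N. f (N + d) / real (N + d) * (1 + real d / real N) + (g N - f (N + d)) / real N)
      \<longlonglongrightarrow> L"
    using tendsto_add by fastforce
  moreover have "\<forall>\<^sub>F N in sequentially.
      f (N + d) / real (N + d) * (1 + real d / real N) + (g N - f (N + d)) / real N = g N / real N"
    using eventually_gt_at_top[of 0]
  proof eventually_elim
    case (elim N)
    then have "1 + real d / real N = real (N + d) / real N"
      by (simp add: field_simps)
    then show ?case
      using elim by (simp add: diff_divide_distrib)
  qed
  ultimately show ?thesis
    by (rule Lim_transform_eventually)
qed

lemma mu_Nil [simp]: "mu p [] = 1"
  by (simp add: mu_def)

lemma mu_Cons [simp]: "mu p (a # v) = p a * mu p v"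
  unfolding mu_def length_Cons prod.lessThan_Suc_shift by simp

lemma mu_append: "mu p (u @ v) = mu p u * mu p v"
  by (induction u) simp_all

lemma mu_nonneg: "(\<And>a. 0 \<le> p a) \<Longrightarrow> 0 \<le> mu p u"
  unfolding mu_def by (simp add: prod_nonneg)

lemma mu_le_1: "(\<And>a. 0 \<le> p a \<and> p a \<le> 1) \<Longrightarrow> mu p u \<le> 1"
  unfolding mu_def by (simp add: prod_le_1)

lemma sum_mu_lists_length_eq:
  assumes "finite A"
  shows "(\<Sum>v\<in>{v. set v \<subseteq> A \<and> length v = g}. mu p v) = sum p A ^ g"
proof (induction g)
  case 0
  have "{v. set v \<subseteq> A \<and> length v = 0} = {[]}"
    by auto
  then show ?case
    by simp
next
  case (Suc g)
  have "(\<Sum>v\<in>{v. set v \<subseteq> A \<and> length v = Suc g}. mu p v)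
      = (\<Sum>(v, a)\<in>{v. set v \<subseteq> A \<and> length v = g} \<times> A. p a * mu p v)"
    unfolding lists_length_Suc_eq by (subst sum.reindex[OF inj_split_Cons]) (simp add: split_def)
  also have "\<dots> = (\<Sum>v\<in>{v. set v \<subseteq> A \<and> length v = g}. mu p v) * sum p A"
    by (simp add: sum.cartesian_product[symmetric] sum_distrib_left sum_distrib_right mult.commute)
  finally show ?case
    using Suc by simp
qed

lemma length_factor [simp]: "length (factor \<alpha> i n) = n"
  by (simp add: factor_def)

lemma factor_add: "factor \<alpha> i (m + n) = factor \<alpha> i m @ factor \<alpha> (i + m) n"
proof -
  have "[i..<i + (m + n)] = [i..<i + m] @ [i + m..<i + m + n]"
    by (metis add.assoc le_add1 upt_add_eq_append)
  then show ?thesis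
    unfolding factor_def by (simp add: add.assoc)
qed

definition occ_ind :: "(nat \<Rightarrow> 'a) \<Rightarrow> 'a list \<Rightarrow> nat \<Rightarrow> real" where
  "occ_ind \<alpha> u i = of_bool (factor \<alpha> i (length u) = u)"

definition occ_count :: "(nat \<Rightarrow> 'a) \<Rightarrow> 'a list \<Rightarrow> nat \<Rightarrow> nat \<Rightarrow> real" where
  "occ_count \<alpha> u s N = (\<Sum>i<N. occ_ind \<alpha> u (s + i))"

lemma occ_ind_nonneg [simp]: "0 \<le> occ_ind \<alpha> u i"
  by (simp add: occ_ind_def)

lemma occ_ind_le_1 [simp]: "occ_ind \<alpha> u i \<le> 1"
  by (simp add: occ_ind_def)

lemma occ_ind_idem [simp]: "occ_ind \<alpha> u i * occ_ind \<alpha> u i = occ_ind \<alpha> u i"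
  by (simp add: occ_ind_def)

lemma occ_ind_Nil [simp]: "occ_ind \<alpha> [] i = 1"
  by (simp add: occ_ind_def factor_def)

lemma occ_ind_append: "occ_ind \<alpha> (u @ v) i = occ_ind \<alpha> u i * occ_ind \<alpha> v (i + length u)"
  by (simp add: occ_ind_def factor_add append_eq_append_conv)

lemma sum_occ_ind_same_length:
  assumes "finite V" and "\<And>v. v \<in> V \<Longrightarrow> length v = g"
  shows "(\<Sum>v\<in>V. occ_ind \<alpha> v i) = of_bool (factor \<alpha> i g \<in> V)"
proof -
  have "(\<Sum>v\<in>V. occ_ind \<alpha> v i) = (\<Sum>v\<in>V. of_bool (factor \<alpha> i g = v))"
    using assms(2) by (intro sum.cong) (auto simp: occ_ind_def)
  then show ?thesis
    using assms(1) by (simp add: sum.delta)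
qed

lemma occ_count_Nil [simp]: "occ_count \<alpha> [] s N = real N"
  by (simp add: occ_count_def)

lemma occ_count_shift: "occ_count \<alpha> u s N = occ_count \<alpha> u 0 (s + N) - occ_count \<alpha> u 0 s"
  by (induction N) (simp_all add: occ_count_def)

lemma occ_prefix_eq_occ_count:
  assumes "u \<noteq> []"
  shows "real (occ_prefix \<alpha> u (N + (length u - 1))) = occ_count \<alpha> u 0 N"
proof -
  have "{i. i + length u \<le> N + (length u - 1) \<and> factor \<alpha> i (length u) = u}
      = {..<N} \<inter> {i. factor \<alpha> i (length u) = u}"
    using assms by (cases u) auto
  then show ?thesis
    by (simp add: occ_prefix_def occ_count_def occ_ind_def)
qed

lemma occ_count_frequency:
  assumes "mu_distributed p \<alpha>"
  shows "(\<lambda>N. occ_count \<alpha> u s N / real N) \<longlonglongrightarrow> mu p u"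
proof (cases "u = []")
  case True
  have "\<forall>\<^sub>F N in sequentially. 1 = occ_count \<alpha> [] s N / real N"
    using eventually_gt_at_top[of 0] by eventually_elim simp
  then show ?thesis
    unfolding True mu_Nil by (rule Lim_transform_eventually[OF tendsto_const])
next
  case False
  then have "(\<lambda>N. real (occ_prefix \<alpha> u N) / real N) \<longlonglongrightarrow> mu p u"
    using assms by (simp add: mu_distributed_def)
  then have "(\<lambda>N. occ_count \<alpha> u 0 N / real N) \<longlonglongrightarrow> mu p u"
    by (rule LIMSEQ_frequency_bounded_shift[where d = "length u - 1" and C = 0])
       (use occ_prefix_eq_occ_count[OF False] in simp)
  moreover have "\<bar>occ_count \<alpha> u s N - occ_count \<alpha> u 0 (N + s)\<bar> \<le> real s" for N
  proof -
    have "occ_count \<alpha> u 0 s \<le> (\<Sum>i<s. 1)"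
      unfolding occ_count_def by (intro sum_mono) simp
    moreover have "0 \<le> occ_count \<alpha> u 0 s"
      unfolding occ_count_def by (intro sum_nonneg) simp
    ultimately show ?thesis
      by (simp add: occ_count_shift[of _ _ s] add.commute)
  qed
  ultimately show ?thesis
    by (rule LIMSEQ_frequency_bounded_shift)
qed

lemma occ_count_eventually_bounds:
  assumes "mu_distributed p \<alpha>" and "\<eta> > 0"
  shows "\<forall>\<^sub>F N in sequentially.
    real N * (mu p u - \<eta>) \<le> occ_count \<alpha> u s N \<and> occ_count \<alpha> u s N \<le> real N * (mu p u + \<eta>)"
proof -
  have "\<forall>\<^sub>F N in sequentially. mu p u - \<eta> < occ_count \<alpha> u s N / real N \<and>
      occ_count \<alpha> u s N / real N < mu p u + \<eta>"
    using occ_count_frequency[OF assms(1)] \<open>\<eta> > 0\<close>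
    by (intro eventually_conj order_tendstoD) auto
  then show ?thesis
    using eventually_gt_at_top[of 0] by eventually_elim (auto simp: field_simps)
qed

lemma bernoulli_dist_nonneg: "bernoulli_dist p \<Longrightarrow> 0 \<le> p a"
  by (simp add: bernoulli_dist_def)

lemma bernoulli_dist_le_1: "bernoulli_dist p \<Longrightarrow> p a \<le> 1"
  by (simp add: bernoulli_dist_def)

lemma bernoulli_dist_sum_le_1:
  assumes "bernoulli_dist p" and "finite A"
  shows "sum p A \<le> 1"
  using assms by (intro has_sum_mono_neutral[OF has_sum_finite])
    (auto simp: bernoulli_dist_def)

lemma bernoulli_dist_finite_approx:
  assumes "bernoulli_dist p" and "\<delta> > 0"
  shows "\<exists>A. finite A \<and> 1 - \<delta> < sum p A ^ g"
proof -
  have "(sum p \<longlongrightarrow> 1) (finite_subsets_at_top UNIV)"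
    using assms(1) by (simp add: bernoulli_dist_def has_sum_def)
  then have "((\<lambda>A. sum p A ^ g) \<longlongrightarrow> 1) (finite_subsets_at_top UNIV)"
    using tendsto_power by fastforce
  then have "\<forall>\<^sub>F A in finite_subsets_at_top UNIV. 1 - \<delta> < sum p A ^ g"
    using assms(2) by (intro order_tendstoD(1)) auto
  then show ?thesis
    by (auto simp: eventually_finite_subsets_at_top)
qed

text \<open>Of the words in \<open>V\<close> only the actual gap word can occur; if it is not in \<open>V\<close>, the
  right-hand side is at least 1.\<close>

lemma occ_ind_gapped_pair_le:
  assumes "finite V" and "\<And>v. v \<in> V \<Longrightarrow> length v = g"
  shows "occ_ind \<alpha> u x * occ_ind \<alpha> w (x + length u + g)
    \<le> (\<Sum>v\<in>V. occ_ind \<alpha> (u @ v @ w) x) + (1 - (\<Sum>v\<in>V. occ_ind \<alpha> v (x + length u)))"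
proof -
  let ?both = "occ_ind \<alpha> u x * occ_ind \<alpha> w (x + length u + g)"
  have "(\<Sum>v\<in>V. occ_ind \<alpha> (u @ v @ w) x) = ?both * (\<Sum>v\<in>V. occ_ind \<alpha> v (x + length u))"
    unfolding sum_distrib_left using assms(2)
    by (intro sum.cong) (simp_all add: occ_ind_append add.assoc)
  moreover have "?both \<le> 1"
    by (simp add: mult_le_one)
  ultimately show ?thesis
    using sum_occ_ind_same_length[OF assms, of \<alpha> "x + length u"]
    by (cases "factor \<alpha> (x + length u) g \<in> V") simp_all
qed

lemma occ_gap_cover_frequency:
  assumes "mu_distributed p \<alpha>" and "finite V"
  shows "(\<lambda>N. (\<Sum>i<N. (\<Sum>v\<in>V. occ_ind \<alpha> (u @ v @ w) (s + i))
      + (1 - (\<Sum>v\<in>V. occ_ind \<alpha> v (s + i + length u)))) / real N)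
    \<longlonglongrightarrow> (\<Sum>v\<in>V. mu p (u @ v @ w)) + (1 - (\<Sum>v\<in>V. mu p v))"
proof -
  have "(\<lambda>N. (\<Sum>v\<in>V. occ_count \<alpha> (u @ v @ w) s N / real N)
      + (1 - (\<Sum>v\<in>V. occ_count \<alpha> v (s + length u) N / real N)))
    \<longlonglongrightarrow> (\<Sum>v\<in>V. mu p (u @ v @ w)) + (1 - (\<Sum>v\<in>V. mu p v))"
    by (intro tendsto_intros occ_count_frequency assms(1))
  moreover have "\<forall>\<^sub>F N in sequentially.
      (\<Sum>v\<in>V. occ_count \<alpha> (u @ v @ w) s N / real N) + (1 - (\<Sum>v\<in>V. occ_count \<alpha> v (s + length u) N / real N))
    = (\<Sum>i<N. (\<Sum>v\<in>V. occ_ind \<alpha> (u @ v @ w) (s + i))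
      + (1 - (\<Sum>v\<in>V. occ_ind \<alpha> v (s + i + length u)))) / real N"
    using eventually_gt_at_top[of 0]
  proof eventually_elim
    case (elim N)
    have "(\<Sum>i<N. (\<Sum>v\<in>V. occ_ind \<alpha> (u @ v @ w) (s + i)) + (1 - (\<Sum>v\<in>V. occ_ind \<alpha> v (s + i + length u))))
        = (\<Sum>v\<in>V. occ_count \<alpha> (u @ v @ w) s N) + (real N - (\<Sum>v\<in>V. occ_count \<alpha> v (s + length u) N))"
      by (simp add: occ_count_def sum.distrib sum_subtractf sum.swap[of _ "{..<N}"] add_ac)
    then show ?case
      using elim by (simp add: sum_divide_distrib[symmetric] field_simps)
  qed
  ultimately show ?thesis
    by (rule Lim_transform_eventually)
qed

lemma occ_pair_frequency_upper:
  assumes bern: "bernoulli_dist p" and md: "mu_distributed p \<alpha>" and "\<eta> > 0"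
  shows "\<forall>\<^sub>F N in sequentially. (\<Sum>i<N. occ_ind \<alpha> u (s + i) * occ_ind \<alpha> w (s + i + length u + g))
           \<le> real N * (mu p u * mu p w + \<eta>)"
proof -
  obtain A where A: "finite A" "1 - \<eta> < sum p A ^ g"
    using bernoulli_dist_finite_approx[OF bern \<open>\<eta> > 0\<close>] by blast
  define V where "V = {v. set v \<subseteq> A \<and> length v = g}"
  have V: "finite V" "\<And>v. v \<in> V \<Longrightarrow> length v = g"
    using A(1) by (simp_all add: V_def finite_lists_length_eq)
  have V_mass: "(\<Sum>v\<in>V. mu p v) = sum p A ^ g"
    unfolding V_def by (rule sum_mu_lists_length_eq[OF A(1)])
  have "mu p u * mu p w * sum p A ^ g \<le> mu p u * mu p w"
    using bernoulli_dist_sum_le_1[OF bern A(1)] bernoulli_dist_nonneg[OF bern]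
    by (intro mult_right_le_one_le mult_nonneg_nonneg mu_nonneg) (auto simp: sum_nonneg power_le_one)
  moreover have "(\<Sum>v\<in>V. mu p (u @ v @ w)) = mu p u * mu p w * sum p A ^ g"
    by (simp add: mu_append sum_distrib_left V_mass[symmetric] mult_ac)
  ultimately have "(\<Sum>v\<in>V. mu p (u @ v @ w)) + (1 - (\<Sum>v\<in>V. mu p v)) < mu p u * mu p w + \<eta>"
    using A(2) V_mass by linarith
  with occ_gap_cover_frequency[OF md V(1), of u w s]
  have "\<forall>\<^sub>F N in sequentially. (\<Sum>i<N. (\<Sum>v\<in>V. occ_ind \<alpha> (u @ v @ w) (s + i))
      + (1 - (\<Sum>v\<in>V. occ_ind \<alpha> v (s + i + length u)))) / real N < mu p u * mu p w + \<eta>"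
    by (rule order_tendstoD)
  then show ?thesis
    using eventually_gt_at_top[of 0]
  proof eventually_elim
    case (elim N)
    have "(\<Sum>i<N. occ_ind \<alpha> u (s + i) * occ_ind \<alpha> w (s + i + length u + g))
        \<le> (\<Sum>i<N. (\<Sum>v\<in>V. occ_ind \<alpha> (u @ v @ w) (s + i)) + (1 - (\<Sum>v\<in>V. occ_ind \<alpha> v (s + i + length u))))"
      by (intro sum_mono occ_ind_gapped_pair_le V)
    with elim show ?case
      by (simp add: divide_less_eq mult.commute)
  qed
qed

lemma sum_sq_deviation_of_mean_le:
  fixes X :: "nat \<Rightarrow> nat \<Rightarrow> real" and q \<eta> :: real
  assumes k: "k \<ge> 1" and q: "0 \<le> q" "q \<le> 1" and "0 \<le> \<eta>"
    and first: "\<And>t. t < k \<Longrightarrow> real N * (q - \<eta>) \<le> (\<Sum>i<N. X t i)"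
    and second: "\<And>t t'. t < k \<Longrightarrow> t' < k \<Longrightarrow>
      (\<Sum>i<N. X t i * X t' i) \<le> real N * (q\<^sup>2 + \<eta> + of_bool (t = t') * q)"
  shows "(\<Sum>i<N. ((\<Sum>t<k. X t i) / real k - q)\<^sup>2) \<le> real N * (q / real k + 3 * \<eta>)"
proof -
  have kpos: "real k > 0"
    using k by simp
  have "(\<Sum>t<k. \<Sum>t'<k. \<Sum>i<N. X t i * X t' i)
      \<le> (\<Sum>t<k. \<Sum>t'<k. real N * (q\<^sup>2 + \<eta> + of_bool (t = t') * q))"
    by (intro sum_mono second) auto
  also have "\<dots> = (real k)\<^sup>2 * (real N * (q\<^sup>2 + \<eta>) + real N * q / real k)"
    using kpos by (simp add: sum.distrib distrib_left sum_distrib_left[symmetric] power2_eq_square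
        field_simps)
  finally have second_sum: "(\<Sum>t<k. \<Sum>t'<k. \<Sum>i<N. X t i * X t' i) / (real k)\<^sup>2
      \<le> real N * (q\<^sup>2 + \<eta>) + real N * q / real k"
    using kpos by (simp add: divide_le_eq mult.commute)
  have "real k * (real N * (q - \<eta>)) \<le> (\<Sum>t<k. \<Sum>i<N. X t i)"
    using sum_mono[of "{..<k}" "\<lambda>_. real N * (q - \<eta>)"] first by simp
  then have first_sum: "2 * q * real N * (q - \<eta>) \<le> 2 * q / real k * (\<Sum>t<k. \<Sum>i<N. X t i)"
    using mult_left_mono[of _ _ "2 * q / real k"] q kpos by fastforce
  have "(\<Sum>i<N. ((\<Sum>t<k. X t i) / real k - q)\<^sup>2)
      = (\<Sum>t<k. \<Sum>t'<k. \<Sum>i<N. X t i * X t' i) / (real k)\<^sup>2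
        - 2 * q / real k * (\<Sum>t<k. \<Sum>i<N. X t i) + real N * q\<^sup>2"
    using kpos
    by (simp add: power2_eq_square field_simps sum_product sum.distrib sum_subtractf
        sum_divide_distrib[symmetric] sum_distrib_left[symmetric] sum.swap[of _ "{..<N}"])
  also have "\<dots> \<le> real N * (q / real k + \<eta> + 2 * q * \<eta>)"
    using second_sum first_sum by (simp add: algebra_simps power2_eq_square)
  also have "\<dots> \<le> real N * (q / real k + 3 * \<eta>)"
    using q \<open>0 \<le> \<eta>\<close> by (intro mult_left_mono) (auto simp: mult_left_le_one_le)
  finally show ?thesis .
qed

lemma le_add_sq_div:
  fixes y q e :: real
  assumes "e > 0"
  shows "y \<le> q + e + (y - q)\<^sup>2 / e"
proof (cases "y - q \<le> e")
  case False
  then have "(y - q) * e \<le> (y - q)\<^sup>2"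
    using assms by (simp add: power2_eq_square mult_left_mono)
  then have "y - q \<le> (y - q)\<^sup>2 / e"
    using assms by (simp add: le_divide_eq)
  then show ?thesis
    using assms by simp
qed (use assms in \<open>simp add: add_increasing2\<close>)

lemma sum_le_window_means:
  fixes x :: "nat \<Rightarrow> real"
  assumes x: "\<And>r. 0 \<le> x r" "\<And>r. x r \<le> 1" and "k \<ge> 1" "e > 0"
  shows "(\<Sum>r<K. x r) \<le> real k + real K * (q + e) + (\<Sum>r<K. ((\<Sum>t<k. x (r + t)) / real k - q)\<^sup>2) / e"
proof -
  define y where "y r = (\<Sum>t<k. x (r + t)) / real k" for r
  have "(\<Sum>r<K. x r) - real k \<le> (\<Sum>r<K. x (r + t))" if "t < k" for t
  proof -
    have "(\<Sum>r<K. x r) \<le> (\<Sum>r<t + K. x r)"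
      using x by (intro sum_mono2) auto
    also have "\<dots> = (\<Sum>r<t. x r) + (\<Sum>r<K. x (r + t))"
      by (induction K) (simp_all add: add.commute)
    also have "(\<Sum>r<t. x r) \<le> real k"
      using sum_mono[of "{..<t}" x "\<lambda>_. 1"] x that by simp
    finally show ?thesis
      by simp
  qed
  then have "real k * ((\<Sum>r<K. x r) - real k) \<le> (\<Sum>t<k. \<Sum>r<K. x (r + t))"
    using sum_mono[of "{..<k}" "\<lambda>_. (\<Sum>r<K. x r) - real k"] by simp
  moreover have "(\<Sum>r<K. y r) = (\<Sum>t<k. \<Sum>r<K. x (r + t)) / real k"
    unfolding y_def sum_divide_distrib[symmetric] by (subst sum.swap) (rule refl)
  ultimately have "(\<Sum>r<K. x r) - real k \<le> (\<Sum>r<K. y r)"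
    using \<open>k \<ge> 1\<close> by (simp add: le_divide_eq mult.commute)
  also have "\<dots> \<le> (\<Sum>r<K. q + e + (y r - q)\<^sup>2 / e)"
    using \<open>e > 0\<close> by (intro sum_mono le_add_sq_div)
  also have "\<dots> = real K * (q + e) + (\<Sum>r<K. (y r - q)\<^sup>2) / e"
    by (simp add: sum.distrib sum_divide_distrib)
  finally show ?thesis
    by (simp add: y_def)
qed

definition block_count :: "(nat \<Rightarrow> 'a) \<Rightarrow> 'a list \<Rightarrow> nat \<Rightarrow> nat \<Rightarrow> real" where
  "block_count \<alpha> w j K = (\<Sum>r<K. occ_ind \<alpha> w (j + r * length w))"

lemma occ_count_eq_sum_block_count:
  "occ_count \<alpha> w j (K * length w) = (\<Sum>j'<length w. block_count \<alpha> w (j + j') K)"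
proof (induction K)
  case (Suc K)
  have split: "(\<Sum>i<m + n. f i) = (\<Sum>i<m. f i) + (\<Sum>i<n. f (m + i))" for f :: "nat \<Rightarrow> real" and m n
    by (induction n) simp_all
  show ?case
    using Suc split[of "\<lambda>i. occ_ind \<alpha> w (j + i)" "K * length w" "length w"]
    by (simp add: occ_count_def block_count_def sum.distrib add_ac)
qed (simp add: occ_count_def block_count_def)

lemma card_blocks_eq_block_count:
  "real (card {r. 1 \<le> r \<and> r \<le> K \<and> factor \<alpha> ((r - 1) * length w) (length w) = w})
     = block_count \<alpha> w 0 K"
proof -
  have "{r. 1 \<le> r \<and> r \<le> K \<and> factor \<alpha> ((r - 1) * length w) (length w) = w}
      = Suc ` ({..<K} \<inter> {r. factor \<alpha> (r * length w) (length w) = w})"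
  proof (intro set_eqI iffI)
    fix r
    assume "r \<in> {r. 1 \<le> r \<and> r \<le> K \<and> factor \<alpha> ((r - 1) * length w) (length w) = w}"
    then show "r \<in> Suc ` ({..<K} \<inter> {r. factor \<alpha> (r * length w) (length w) = w})"
      by (intro image_eqI[of _ _ "r - 1"]) auto
  qed auto
  then show ?thesis
    by (simp add: block_count_def occ_ind_def card_image)
qed

lemma block_count_le_window_sq_deviation:
  assumes "w \<noteq> []" and "k \<ge> 1" and "e > 0"
  shows "block_count \<alpha> w j K \<le> real k + real K * (q + e)
    + (\<Sum>i<K * length w. ((\<Sum>t<k. occ_ind \<alpha> w (j + t * length w + i)) / real k - q)\<^sup>2) / e"
proof -
  define n where "n = length w"
  define dev where "dev i = ((\<Sum>t<k. occ_ind \<alpha> w (j + t * n + i)) / real k - q)\<^sup>2" for i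
  have n: "n \<ge> 1"
    using assms(1) by (simp add: n_def Suc_le_eq)
  have "(\<Sum>r<K. dev (r * n)) = sum dev ((\<lambda>r. r * n) ` {..<K})"
    using n by (simp add: sum.reindex inj_on_def)
  also have "\<dots> \<le> (\<Sum>i<K * n. dev i)"
    using n by (intro sum_mono2) (auto simp: dev_def)
  finally have "(\<Sum>r<K. dev (r * n)) / e \<le> (\<Sum>i<K * n. dev i) / e"
    using \<open>e > 0\<close> by (intro divide_right_mono) auto
  moreover have "block_count \<alpha> w j K \<le> real k + real K * (q + e) + (\<Sum>r<K. dev (r * n)) / e"
    using sum_le_window_means[of "\<lambda>r. occ_ind \<alpha> w (j + r * n)" k e K q] assms(2,3)
    by (simp add: block_count_def dev_def n_def algebra_simps)
  ultimately show ?thesis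
    by (simp add: dev_def n_def)
qed

context
  fixes p :: "'a \<Rightarrow> real" and \<alpha> :: "nat \<Rightarrow> 'a"
  assumes bern: "bernoulli_dist p" and md: "mu_distributed p \<alpha>"
begin

lemma block_pair_frequency_upper:
  assumes "t < t'" and "\<eta> > 0"
  shows "\<forall>\<^sub>F N in sequentially.
    (\<Sum>i<N. occ_ind \<alpha> w (j + t * length w + i) * occ_ind \<alpha> w (j + t' * length w + i))
      \<le> real N * ((mu p w)\<^sup>2 + \<eta>)"
proof -
  have "t' * length w = t * length w + length w + (t' - t - 1) * length w"
    using \<open>t < t'\<close> add_mult_distrib[of "t + 1" "t' - t - 1" "length w"] by simp
  then have shift: "j + t * length w + i + length w + (t' - t - 1) * length w = j + t' * length w + i"
    for i
    by simp
  show ?thesis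
    using occ_pair_frequency_upper[OF bern md \<open>\<eta> > 0\<close>, of w "j + t * length w" w "(t' - t - 1) * length w"]
    unfolding shift by (simp add: power2_eq_square)
qed

lemma block_second_moments:
  assumes "\<eta> > 0"
  shows "\<forall>\<^sub>F N in sequentially. \<forall>t\<in>{..<k}. \<forall>t'\<in>{..<k}.
    (\<Sum>i<N. occ_ind \<alpha> w (j + t * length w + i) * occ_ind \<alpha> w (j + t' * length w + i))
      \<le> real N * ((mu p w)\<^sup>2 + \<eta> + of_bool (t = t') * mu p w)"
proof (intro eventually_ball_finite ballI finite_lessThan)
  fix t t'
  show "\<forall>\<^sub>F N in sequentially.
    (\<Sum>i<N. occ_ind \<alpha> w (j + t * length w + i) * occ_ind \<alpha> w (j + t' * length w + i))
      \<le> real N * ((mu p w)\<^sup>2 + \<eta> + of_bool (t = t') * mu p w)"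
  proof (cases t t' rule: linorder_cases)
    case equal
    show ?thesis
      using occ_count_eventually_bounds[OF md \<open>\<eta> > 0\<close>, of w "j + t * length w"]
      by eventually_elim (auto simp: equal occ_count_def add.assoc intro: order_trans[OF _ mult_left_mono])
  next
    case less
    show ?thesis
      using block_pair_frequency_upper[OF less \<open>\<eta> > 0\<close>, of w j]
      by eventually_elim (use less in simp)
  next
    case greater
    show ?thesis
      using block_pair_frequency_upper[OF greater \<open>\<eta> > 0\<close>, of w j]
      by eventually_elim (use greater in \<open>simp add: mult.commute\<close>)
  qed
qed

lemma block_window_sq_deviation:
  assumes "k \<ge> 1" and "\<eta> > 0"
  shows "\<forall>\<^sub>F N in sequentially.
    (\<Sum>i<N. ((\<Sum>t<k. occ_ind \<alpha> w (j + t * length w + i)) / real k - mu p w)\<^sup>2)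
      \<le> real N * (mu p w / real k + 3 * \<eta>)"
proof -
  have q: "0 \<le> mu p w" "mu p w \<le> 1"
    using bern by (simp_all add: mu_nonneg mu_le_1 bernoulli_dist_nonneg bernoulli_dist_le_1)
  have "\<forall>\<^sub>F N in sequentially. \<forall>t\<in>{..<k}.
      real N * (mu p w - \<eta>) \<le> (\<Sum>i<N. occ_ind \<alpha> w (j + t * length w + i))"
  proof (intro eventually_ball_finite ballI finite_lessThan)
    fix t
    show "\<forall>\<^sub>F N in sequentially. real N * (mu p w - \<eta>) \<le> (\<Sum>i<N. occ_ind \<alpha> w (j + t * length w + i))"
      using occ_count_eventually_bounds[OF md \<open>\<eta> > 0\<close>, of w "j + t * length w"]
      by eventually_elim (simp add: occ_count_def add.assoc)
  qed
  with block_second_moments[OF \<open>\<eta> > 0\<close>, of k w j] show ?thesis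
    by eventually_elim (rule sum_sq_deviation_of_mean_le[OF \<open>k \<ge> 1\<close> q less_imp_le[OF \<open>\<eta> > 0\<close>]]; simp)
qed

lemma block_count_eventually_le:
  assumes "w \<noteq> []" and "k \<ge> 1" and "\<eta> > 0" and "e > 0"
  shows "\<forall>\<^sub>F K in sequentially. block_count \<alpha> w j K
    \<le> real k + real K * (mu p w + e + real (length w) * (mu p w / real k + 3 * \<eta>) / e)"
proof -
  have "filterlim (\<lambda>K. K * length w) sequentially sequentially"
    using assms(1) by (intro mult_nat_right_at_top) simp
  from eventually_compose_filterlim[OF block_window_sq_deviation[OF assms(2,3), of w j] this]
  show ?thesis
  proof eventually_elim
    case (elim K)
    then have "(\<Sum>i<K * length w. ((\<Sum>t<k. occ_ind \<alpha> w (j + t * length w + i)) / real k - mu p w)\<^sup>2) / e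
        \<le> real K * (real (length w) * (mu p w / real k + 3 * \<eta>) / e)"
      using \<open>e > 0\<close> by (simp add: divide_right_mono mult.assoc)
    then show ?case
      using block_count_le_window_sq_deviation[OF assms(1,2,4), of \<alpha> j K "mu p w"]
      by (simp add: distrib_left)
  qed
qed

lemma block_count_upper:
  assumes "w \<noteq> []" and "\<epsilon> > 0"
  shows "\<forall>\<^sub>F K in sequentially. block_count \<alpha> w j K \<le> real K * (mu p w + \<epsilon>)"
proof -
  define n q where "n = length w" and "q = mu p w"
  have n: "n \<ge> 1"
    using assms(1) by (simp add: n_def Suc_le_eq)
  have q: "q \<le> 1"
    using bern by (simp add: q_def mu_le_1 bernoulli_dist_nonneg bernoulli_dist_le_1)
  \<comment> \<open>\<open>k\<close> and \<open>\<eta>\<close> make the deviation term at most \<open>K\<epsilon>/4\<close>; the \<open>k\<close> boundary terms are at most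
    \<open>K\<epsilon>/4\<close> once \<open>K \<ge> 4k/\<epsilon>\<close>.\<close>
  obtain k :: nat where k: "16 * real n / \<epsilon>\<^sup>2 < real k"
    using reals_Archimedean2 by blast
  moreover have "0 < 16 * real n / \<epsilon>\<^sup>2"
    using n \<open>\<epsilon> > 0\<close> by simp
  ultimately have "k \<ge> 1"
    by (simp add: Suc_le_eq)
  define \<eta> where "\<eta> = \<epsilon>\<^sup>2 / (48 * real n)"
  have "\<eta> > 0"
    using n \<open>\<epsilon> > 0\<close> by (simp add: \<eta>_def)
  have "real n * q / real k \<le> real n / real k"
    using q by (simp add: divide_right_mono mult_left_le)
  also have "\<dots> \<le> \<epsilon>\<^sup>2 / 16"
    using k \<open>k \<ge> 1\<close> \<open>\<epsilon> > 0\<close> by (simp add: field_simps)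
  finally have "real n * q / real k \<le> \<epsilon>\<^sup>2 / 16" .
  moreover have "real n * (q / real k + 3 * \<eta>) = real n * q / real k + \<epsilon>\<^sup>2 / 16"
    using n by (simp add: \<eta>_def field_simps)
  ultimately have "real n * (q / real k + 3 * \<eta>) \<le> \<epsilon>\<^sup>2 / 8"
    by linarith
  then have coeff: "real n * (q / real k + 3 * \<eta>) / (\<epsilon> / 2) \<le> \<epsilon> / 4"
    using \<open>\<epsilon> > 0\<close> by (simp add: divide_le_eq power2_eq_square mult.commute)
  have "\<forall>\<^sub>F K in sequentially. 4 * real k / \<epsilon> \<le> real K"
    by (rule eventually_ge_at_top[of "nat \<lceil>4 * real k / \<epsilon>\<rceil>", THEN eventually_mono]) linarith
  with block_count_eventually_le[OF assms(1) \<open>k \<ge> 1\<close> \<open>\<eta> > 0\<close> half_gt_zero[OF \<open>\<epsilon> > 0\<close>], of j]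
  show ?thesis
  proof eventually_elim
    case (elim K)
    have "real k \<le> real K * \<epsilon> / 4"
      using elim(2) \<open>\<epsilon> > 0\<close> by (simp add: divide_le_eq mult.commute)
    moreover have "real K * (real n * (q / real k + 3 * \<eta>) / (\<epsilon> / 2)) \<le> real K * \<epsilon> / 4"
      using mult_left_mono[OF coeff, of "real K"] by simp
    moreover have "block_count \<alpha> w j K
        \<le> real k + (real K * q + real K * \<epsilon> / 2 + real K * (real n * (q / real k + 3 * \<eta>) / (\<epsilon> / 2)))"
      using elim(1) unfolding n_def q_def distrib_left by simp
    ultimately show ?case
      unfolding distrib_left q_def[symmetric] by linarith
  qed
qed

lemma block_count_lower:
  assumes "w \<noteq> []" and "\<epsilon> > 0"
  shows "\<forall>\<^sub>F K in sequentially. real K * (mu p w - \<epsilon>) \<le> block_count \<alpha> w j K"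
proof -
  define n q where "n = length w" and "q = mu p w"
  obtain m where m: "n = Suc m"
    using assms(1) by (cases w) (simp_all add: n_def)
  define e where "e = \<epsilon> / (2 * real n)"
  have e: "e > 0"
    using \<open>\<epsilon> > 0\<close> by (simp add: e_def m)
  have "\<forall>\<^sub>F K in sequentially. real (K * n) * (q - e) \<le> occ_count \<alpha> w j (K * n)"
  proof -
    have "filterlim (\<lambda>K. K * n) sequentially sequentially"
      by (rule mult_nat_right_at_top) (simp add: m)
    from eventually_compose_filterlim[OF occ_count_eventually_bounds[OF md e, of w j] this]
    show ?thesis
      by (auto simp: q_def elim: eventually_mono)
  qed
  moreover have "\<forall>\<^sub>F K in sequentially. \<forall>j'\<in>{..<m}. block_count \<alpha> w (j + Suc j') K \<le> real K * (q + e)"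
    using block_count_upper[OF assms(1) e] by (simp add: eventually_ball_finite q_def)
  ultimately show ?thesis
  proof eventually_elim
    case (elim K)
    have "(\<Sum>j'<m. block_count \<alpha> w (j + Suc j') K) \<le> real m * (real K * (q + e))"
      using sum_mono[of "{..<m}" "\<lambda>j'. block_count \<alpha> w (j + Suc j') K" "\<lambda>_. real K * (q + e)"] elim
      by simp
    moreover have "occ_count \<alpha> w j (K * n) = block_count \<alpha> w j K + (\<Sum>j'<m. block_count \<alpha> w (j + Suc j') K)"
      using occ_count_eq_sum_block_count[of \<alpha> w j K] m
      by (simp add: n_def sum.lessThan_Suc_shift del: sum.lessThan_Suc)
    ultimately have "real K * (q - (real n + real m) * e) \<le> block_count \<alpha> w j K"
      using elim m by (simp add: algebra_simps)
    moreover have "real K * (q - \<epsilon>) \<le> real K * (q - (real n + real m) * e)"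
      using m \<open>\<epsilon> > 0\<close> by (intro mult_left_mono) (simp_all add: e_def field_simps)
    ultimately show ?case
      by (simp add: q_def)
  qed
qed

lemma block_count_frequency:
  assumes "w \<noteq> []"
  shows "(\<lambda>K. block_count \<alpha> w j K / real K) \<longlonglongrightarrow> mu p w"
proof (rule order_tendstoI)
  fix a
  assume "a < mu p w"
  then have "\<forall>\<^sub>F K in sequentially. real K * (mu p w - (mu p w - a) / 2) \<le> block_count \<alpha> w j K"
    by (intro block_count_lower assms) simp
  then show "\<forall>\<^sub>F K in sequentially. a < block_count \<alpha> w j K / real K"
    using eventually_gt_at_top[of 0]
  proof eventually_elim
    case (elim K)
    have "real K * a < real K * (mu p w - (mu p w - a) / 2)"
      using elim(2) \<open>a < mu p w\<close> by (intro mult_strict_left_mono) (auto simp: field_simps)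
    with elim(1) have "real K * a < block_count \<alpha> w j K"
      by linarith
    then show ?case
      using elim(2) by (simp add: less_divide_eq mult.commute)
  qed
next
  fix a
  assume "mu p w < a"
  then have "\<forall>\<^sub>F K in sequentially. block_count \<alpha> w j K \<le> real K * (mu p w + (a - mu p w) / 2)"
    by (intro block_count_upper assms) simp
  then show "\<forall>\<^sub>F K in sequentially. block_count \<alpha> w j K / real K < a"
    using eventually_gt_at_top[of 0]
  proof eventually_elim
    case (elim K)
    have "real K * (mu p w + (a - mu p w) / 2) < real K * a"
      using elim(2) \<open>mu p w < a\<close> by (intro mult_strict_left_mono) (auto simp: field_simps)
    with elim(1) have "block_count \<alpha> w j K < real K * a"
      by linarith
    then show ?case
      using elim(2) by (simp add: divide_less_eq mult.commute)
  qed
qed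

end

theorem proposition5p1:
  fixes p :: "'a::countable \<Rightarrow> real" and \<alpha> :: "nat \<Rightarrow> 'a"
  assumes "bernoulli_dist p"
    and "mu_distributed p \<alpha>"
  shows "mu_block_distributed p \<alpha>"
  unfolding mu_block_distributed_def
proof (intro allI impI)
  fix n and w :: "'a list"
  assume "n \<ge> 1" and "length w = n"
  then have "(\<lambda>K. block_count \<alpha> w 0 K / real K) \<longlonglongrightarrow> mu p w"
    by (intro block_count_frequency[OF assms]) auto
  moreover have "real (card {r. 1 \<le> r \<and> r \<le> k \<and> factor \<alpha> ((r - 1) * n) n = w})
      = block_count \<alpha> w 0 k" for k
    using card_blocks_eq_block_count[of k \<alpha> w] \<open>length w = n\<close> by simp
  ultimately show "(\<lambda>k. real (card {r. 1 \<le> r \<and> r \<le> k \<and> factor \<alpha> ((r - 1) * n) n = w}) / real k)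
      \<longlonglongrightarrow> mu p w"
    by simp
qed

end
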